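(* For $\sigma\in\mathcal{M}^{\rm TF}$, the potential $\Phi_\sigma:=V_{\rm nuc}+\sigma*\log|\cdot|$ is continuous and once continuously differentiable away from the points $x_1,\ldots,x_K$, and $\Phi_\sigma(x)\to0$ as $|x|\to\infty$. More generally, if $\sigma\in L^\infty(\mathbb{R}^2)\cap L^1(\mathbb{R}^2,\log(2+|x|)dx)$ with $0\le\sigma\le1$ and $\int_{\mathbb{R}^2}\sigma<K$, then $$\Big|\Phi_\sigma(x)+\Big(K-\int_{\mathbb{R}^2}\sigma\Big)\log|x|\Big|\to0\quad\text{as }|x|\to\infty.$$
   Context: Let $K\ge1$ be an integer, $x_1,\ldots,x_K\in\mathbb{R}^2$ and $V_{\rm nuc}(x)=-\sum_{i=1}^K\log|x-x_i|$. $\mathcal{M}^{\rm TF}=\{\sigma\in L^\infty(\mathbb{R}^2)\cap L^1(\mathbb{R}^2,\log(2+|x|)dx):0\leq\sigma\leq1,\ \int\sigma=K\}$. *)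

theory Defs
  imports "HOL-Analysis.Analysis"
begin

definition admissible_density :: "(real^2 \<Rightarrow> real) \<Rightarrow> bool" where
  "admissible_density \<sigma> \<longleftrightarrow>
     \<sigma> \<in> borel_measurable lebesgue \<and>
     (\<forall>x. 0 \<le> \<sigma> x \<and> \<sigma> x \<le> 1) \<and>
     integrable lebesgue (\<lambda>x. \<sigma> x * ln (2 + norm x))"

definition M_TF :: "nat \<Rightarrow> (real^2 \<Rightarrow> real) set" where
  "M_TF K = {\<sigma>. admissible_density \<sigma> \<and> integral\<^sup>L lebesgue \<sigma> = real K}"

definition V_nuc :: "nat \<Rightarrow> (nat \<Rightarrow> real^2) \<Rightarrow> real^2 \<Rightarrow> real" where
  "V_nuc K xs x = - (\<Sum>i<K. ln (norm (x - xs i)))"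

definition Phi :: "nat \<Rightarrow> (nat \<Rightarrow> real^2) \<Rightarrow> (real^2 \<Rightarrow> real) \<Rightarrow> real^2 \<Rightarrow> real" where
  "Phi K xs \<sigma> x = V_nuc K xs x + (\<integral>y. \<sigma> y * ln (norm (x - y)) \<partial>lebesgue)"

end

theory Submission
  imports Defs
begin

text \<open>
  Write \<open>\<Phi>\<^sub>\<sigma> = V_nuc + N\<close> with \<open>N x = \<integral> \<sigma> y ln |x - y| dy\<close>. Because \<open>0 \<le> \<sigma> \<le> 1\<close>, the kernels
  \<open>ln |z|\<close> and \<open>1/|z|\<close> are integrable against \<open>\<sigma>\<close> uniformly in the shift: near the
  singularity they are dominated by \<open>1/|z|\<close> on the unit disc, which is integrable in the plane,
  and far away by the weight \<open>ln (2 + |y|)\<close>. The candidate gradient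
  \<open>G x = \<integral> \<sigma> y (x - y)/|x - y|\<^sup>2 dy\<close> is the uniform limit of the convolutions with the bounded
  continuous truncations \<open>z / (max |z| d)\<^sup>2\<close>, hence bounded and continuous. For almost every \<open>y\<close>
  the segment from \<open>x\<close> to \<open>x + h\<close> avoids \<open>y\<close>, so the fundamental theorem of calculus and
  Fubini give \<open>N (x + h) - N x = \<integral>\<^sub>0\<^sup>1 G (x + t h) \<bullet> h dt\<close>, and \<open>N\<close> is \<open>C\<^sup>1\<close> with gradient \<open>G\<close>.
  For the behaviour at infinity, \<open>N x - (\<integral> \<sigma>) ln |x| = \<integral> \<sigma> y (ln |x - y| - ln |x|) dy\<close> is split
  into \<open>|y| < \<rho>\<close>, where the integrand is \<open>O(\<rho> / |x|)\<close>, the tail \<open>|y| \<ge> \<rho>\<close>, controlled by the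
  weight, and a small disc around \<open>x\<close>; each part is small for large \<open>|x|\<close>.
\<close>

lemma lborel_eq_distr_reflect:
  fixes t :: "'a::euclidean_space"
  shows "lborel = distr lborel borel (\<lambda>y. t - y)"
proof -
  have "(lborel :: 'a measure) = density (distr lborel borel (\<lambda>x. t + (-1) *\<^sub>R x)) (\<lambda>_. \<bar>-1::real\<bar>^DIM('a))"
    by (rule lborel_affine) simp
  then show ?thesis by (simp add: density_1)
qed

lemma integrable_reflect_lborel:
  fixes f :: "'a::euclidean_space \<Rightarrow> 'b::{banach,second_countable_topology}"
  assumes [measurable]: "f \<in> borel_measurable borel" and "integrable lborel f"
  shows "integrable lborel (\<lambda>y. f (x - y))"
proof -
  have "integrable (distr lborel borel (\<lambda>y. x - y)) f"
    by (subst lborel_eq_distr_reflect[symmetric]) (rule assms(2))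
  then show ?thesis by (subst (asm) integrable_distr_eq) auto
qed

lemma integral_reflect_lborel:
  fixes f :: "'a::euclidean_space \<Rightarrow> 'b::{banach,second_countable_topology}"
  assumes [measurable]: "f \<in> borel_measurable borel"
  shows "(\<integral>y. f (x - y) \<partial>lborel) = integral\<^sup>L lborel f"
proof -
  have "integral\<^sup>L lborel f = integral\<^sup>L (distr lborel borel (\<lambda>y. x - y)) f"
    by (subst lborel_eq_distr_reflect[symmetric]) (rule refl)
  also have "\<dots> = (\<integral>y. f (x - y) \<partial>lborel)" by (rule integral_distr) auto
  finally show ?thesis ..
qed

lemma continuous_on_integral_dominated:
  fixes f :: "'a::metric_space \<Rightarrow> 'c \<Rightarrow> 'b::{banach,second_countable_topology}"
  assumes "\<And>x. f x \<in> borel_measurable M"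
    and "\<And>y. continuous_on UNIV (\<lambda>x. f x y)"
    and "integrable M w" and "\<And>x y. norm (f x y) \<le> w y"
  shows "continuous_on UNIV (\<lambda>x. \<integral>y. f x y \<partial>M)"
proof (rule continuous_on_sequentiallyI)
  fix u :: "nat \<Rightarrow> 'a" and a assume u: "u \<longlonglongrightarrow> a"
  show "(\<lambda>n. \<integral>y. f (u n) y \<partial>M) \<longlonglongrightarrow> (\<integral>y. f a y \<partial>M)"
  proof (rule integral_dominated_convergence[where w=w])
    show "AE y in M. (\<lambda>n. f (u n) y) \<longlonglongrightarrow> f a y"
      by (intro AE_I2 continuous_on_tendsto_compose[OF assms(2) u]) auto
  qed (use assms in auto)
qed

lemma abs_line_integral_inner_minus_le:
  fixes G :: "'a::euclidean_space \<Rightarrow> 'a"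
  assumes [measurable]: "G \<in> borel_measurable borel" and bound: "\<And>w. norm (G w) \<le> C"
    and near: "\<And>t. t \<in> {0..1} \<Longrightarrow> norm (G (x + t *\<^sub>R h) - G x) \<le> e"
  shows "\<bar>(\<integral>t. indicator {0..1} t * (G (x + t *\<^sub>R h) \<bullet> h) \<partial>lborel) - G x \<bullet> h\<bar> \<le> e * norm h"
proof -
  let ?I = "indicator {0..1::real}"
  have bounded: "\<bar>G w \<bullet> h\<bar> \<le> C * norm h" for w
    using Cauchy_Schwarz_ineq2[of "G w" h] bound[of w] by (meson mult_right_mono norm_ge_zero order_trans)
  have int1: "integrable lborel (\<lambda>t. ?I t * (G (x + t *\<^sub>R h) \<bullet> h))"
  proof (rule Bochner_Integration.integrable_bound)
    show "integrable lborel (\<lambda>t. ?I t * (C * norm h))"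
      by (intro integrable_mult_left integrable_real_indicator) auto
    show "AE t in lborel. norm (?I t * (G (x + t *\<^sub>R h) \<bullet> h)) \<le> norm (?I t * (C * norm h))"
      using bounded by (intro AE_I2) (auto simp: indicator_def intro: order_trans[OF _ abs_ge_self])
  qed measurable
  have int2: "integrable lborel (\<lambda>t. ?I t * (G x \<bullet> h))"
    by (intro integrable_mult_left integrable_real_indicator) auto
  have "(\<integral>t. ?I t * (G x \<bullet> h) \<partial>lborel) = G x \<bullet> h"
    by (simp add: measure_lborel_Icc)
  then have "(\<integral>t. ?I t * (G (x + t *\<^sub>R h) \<bullet> h) \<partial>lborel) - G x \<bullet> h
      = (\<integral>t. ?I t * (G (x + t *\<^sub>R h) \<bullet> h) - ?I t * (G x \<bullet> h) \<partial>lborel)"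
    using Bochner_Integration.integral_diff[OF int1 int2] by simp
  also have "\<bar>\<dots>\<bar> \<le> (\<integral>t. ?I t * (e * norm h) \<partial>lborel)"
    unfolding real_norm_def[symmetric]
  proof (rule Bochner_Integration.integral_norm_bound_integral)
    show "integrable lborel (\<lambda>t. ?I t * (e * norm h))"
      by (intro integrable_mult_left integrable_real_indicator) auto
    fix t :: real
    show "norm (?I t * (G (x + t *\<^sub>R h) \<bullet> h) - ?I t * (G x \<bullet> h)) \<le> ?I t * (e * norm h)"
    proof (cases "t \<in> {0..1}")
      case True
      then have "\<bar>(G (x + t *\<^sub>R h) - G x) \<bullet> h\<bar> \<le> e * norm h"
        using Cauchy_Schwarz_ineq2[of "G (x + t *\<^sub>R h) - G x" h] near[of t]
        by (meson mult_right_mono norm_ge_zero order_trans)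
      then show ?thesis using True by (simp add: inner_diff_left)
    qed simp
  qed (intro Bochner_Integration.integrable_diff int1 int2)
  also have "\<dots> = e * norm h" by simp
  finally show ?thesis .
qed

lemma has_derivative_of_line_integral:
  fixes F :: "'a::euclidean_space \<Rightarrow> real" and G :: "'a \<Rightarrow> 'a"
  assumes line: "\<And>h. F (x + h) - F x = (\<integral>t. indicator {0..1} t * (G (x + t *\<^sub>R h) \<bullet> h) \<partial>lborel)"
    and "G \<in> borel_measurable borel" and "\<And>w. norm (G w) \<le> C"
    and cont: "isCont G x"
  shows "(F has_derivative (\<lambda>h. G x \<bullet> h)) (at x)"
  unfolding has_derivative_at_alt
proof (intro conjI allI impI bounded_linear_inner_right)
  fix e :: real assume "0 < e"
  then obtain d where d: "0 < d" "\<And>w. dist w x < d \<Longrightarrow> dist (G w) (G x) < e"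
    using cont by (metis continuous_at_eps_delta dist_commute)
  show "\<exists>d>0. \<forall>y. norm (y - x) < d \<longrightarrow> norm (F y - F x - G x \<bullet> (y - x)) \<le> e * norm (y - x)"
  proof (intro exI[of _ d] conjI allI impI d)
    fix y assume y: "norm (y - x) < d"
    have "norm (G (x + t *\<^sub>R (y - x)) - G x) \<le> e" if "t \<in> {0..1}" for t
    proof -
      have "norm (t *\<^sub>R (y - x)) \<le> norm (y - x)"
        using that by (simp add: mult_left_le_one_le)
      then show ?thesis using d(2)[of "x + t *\<^sub>R (y - x)"] y by (simp add: dist_norm)
    qed
    then show "norm (F y - F x - G x \<bullet> (y - x)) \<le> e * norm (y - x)"
      using abs_line_integral_inner_minus_le[OF assms(2,3)] line[of "y - x"] by simp
  qed
qed

lemma AE_lborel_not_on_line: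
  fixes x h :: "'a::euclidean_space"
  assumes "1 < DIM('a)"
  shows "AE y in lborel. \<forall>t::real. x + t *\<^sub>R h \<noteq> y"
proof -
  have "negligible (span {h})"
    using assms by (intro negligible_lowdim) (simp add: dim_span)
  then have "negligible ((+) x ` span {h})"
    by (rule negligible_translation)
  then have "(+) x ` span {h} \<in> null_sets lebesgue"
    by (simp add: negligible_iff_null_sets)
  then have "AE y in lborel. y \<notin> (+) x ` span {h}"
    using AE_not_in AE_completion_iff by blast
  then show ?thesis
  proof eventually_elim
    case (elim y)
    show ?case
    proof (intro allI notI)
      fix t :: real assume "x + t *\<^sub>R h = y"
      moreover have "t *\<^sub>R h \<in> span {h}" by (intro span_mul span_base) auto
      ultimately show False using elim by auto
    qed
  qed
qed

lemma sets_borel_norm_ge [measurable]: "{y::'a::euclidean_space. c \<le> norm y} \<in> sets borel"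
  by (intro borel_closed closed_Collect_le) (auto intro: continuous_intros)

lemma integral_tail_tendsto_0:
  fixes f :: "'a::euclidean_space \<Rightarrow> real"
  assumes f: "integrable lborel f"
  shows "((\<lambda>R. \<integral>y. f y * indicator {y. R \<le> norm y} y \<partial>lborel) \<longlongrightarrow> 0) at_top"
proof -
  have [measurable]: "f \<in> borel_measurable borel" using borel_measurable_integrable[OF f] by simp
  have "((\<lambda>R. \<integral>y. f y * indicator {y. R \<le> norm y} y \<partial>lborel) \<longlongrightarrow> integral\<^sup>L lborel (\<lambda>_::'a. 0::real)) at_top"
  proof (rule integral_dominated_convergence_at_top[where w="\<lambda>y. \<bar>f y\<bar>"])
    show "AE y in lborel. ((\<lambda>R. f y * indicator {y. R \<le> norm y} y) \<longlongrightarrow> 0) at_top"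
    proof (intro AE_I2 tendsto_eventually)
      fix y :: 'a
      show "eventually (\<lambda>R. f y * indicator {y. R \<le> norm y} y = 0) at_top"
        using eventually_gt_at_top[of "norm y"] by eventually_elim auto
    qed
    show "\<forall>\<^sub>F R in at_top. AE y in lborel. norm (f y * indicator {y. R \<le> norm y} y) \<le> \<bar>f y\<bar>"
      by (intro always_eventually allI AE_I2) (auto simp: indicator_def)
  qed (auto intro: f integrable_abs)
  then show ?thesis by simp
qed

lemma integral_tail_small:
  fixes f :: "'a::euclidean_space \<Rightarrow> real"
  assumes "integrable lborel f" "0 < c"
  obtains R0 where "\<And>R. R0 \<le> R \<Longrightarrow> \<bar>\<integral>y. f y * indicator {y. R \<le> norm y} y \<partial>lborel\<bar> < c"
  using integral_tail_tendsto_0[OF assms(1)] assms(2)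
  by (auto simp: tendsto_iff dist_real_def eventually_at_top_linorder)

section \<open>The kernel 1/|z| near the origin\<close>

lemma sets_borel_ball [measurable]: "ball c r \<in> sets borel"
  by simp

definition inv_norm_ball :: "real \<Rightarrow> 'a::real_normed_vector \<Rightarrow> real" where
  "inv_norm_ball r z = indicator (ball 0 r) z * inverse (norm z)"

lemma inv_norm_ball_measurable [measurable]:
  "inv_norm_ball r \<in> borel_measurable (borel :: 'a::euclidean_space measure)"
  unfolding inv_norm_ball_def by measurable

lemma inv_norm_ball_nonneg: "0 \<le> inv_norm_ball r z"
  by (simp add: inv_norm_ball_def)

lemma inv_norm_ball_mono: "r \<le> s \<Longrightarrow> inv_norm_ball r z \<le> inv_norm_ball s z"
  by (auto simp: inv_norm_ball_def indicator_def)

text \<open>Dyadic decomposition: on the annulus 2^(-k-1) \<le> |z| < 2^(-k) the kernel is at most 2^(k+1).\<close>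
lemma inv_norm_ball_le_dyadic_sum:
  "ennreal (inv_norm_ball 1 z) \<le> (\<Sum>k. ennreal (2^(k+1)) * indicator (ball (0::'a::real_normed_vector) ((1/2)^k)) z)"
proof (cases "z \<in> ball 0 1 \<and> z \<noteq> 0")
  case False then show ?thesis by (auto simp: inv_norm_ball_def)
next
  case True
  then have z0: "0 < norm z" "norm z < 1" by auto
  obtain n where n: "(1/2::real)^n < norm z" using real_arch_pow_inv[OF z0(1), of "1/2"] by auto
  define m where "m = (LEAST m. (1/2::real)^m \<le> norm z)"
  have m1: "(1/2::real)^m \<le> norm z" unfolding m_def by (rule LeastI[of _ n]) (use n in simp)
  have "m \<noteq> 0" using m1 z0 by (cases m) auto
  then obtain k where k: "m = Suc k" by (cases m) auto
  have k1: "\<not> (1/2::real)^k \<le> norm z"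
    using not_less_Least[of k "\<lambda>m. (1/2::real)^m \<le> norm z"] k m_def by auto
  have "inverse (norm z) \<le> inverse ((1/2::real)^(k+1))"
    using m1 k by (intro le_imp_inverse_le) auto
  then have "inverse (norm z) \<le> 2^(k+1)" by (simp add: power_one_over)
  then have "ennreal (inv_norm_ball 1 z) \<le> ennreal (2^(k+1)) * indicator (ball (0::'a) ((1/2)^k)) z"
    using True k1 by (auto simp: inv_norm_ball_def intro!: ennreal_leI)
  also have "\<dots> \<le> (\<Sum>k. ennreal (2^(k+1)) * indicator (ball (0::'a) ((1/2)^k)) z)"
    using ennreal_suminf_lessD[of "\<lambda>k. ennreal (2^(k+1)) * indicator (ball (0::'a) ((1/2)^k)) z" _ k]
    by (meson not_le order.irrefl)
  finally show ?thesis .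
qed

lemma nn_integral_inv_norm_ball_1_le:
  "(\<integral>\<^sup>+z. ennreal (inv_norm_ball 1 z) \<partial>(lborel :: (real^2) measure)) \<le> ennreal (4 * pi)"
proof -
  let ?f = "\<lambda>k (z::real^2). ennreal (2^(k+1)) * indicator (ball 0 ((1/2)^k)) z"
  have "(\<integral>\<^sup>+z. ennreal (inv_norm_ball 1 (z::real^2)) \<partial>lborel) \<le> (\<integral>\<^sup>+z. (\<Sum>k. ?f k z) \<partial>lborel)"
    by (rule nn_integral_mono) (rule inv_norm_ball_le_dyadic_sum)
  also have "\<dots> = (\<Sum>k. \<integral>\<^sup>+z. ?f k z \<partial>lborel)"
    by (intro nn_integral_suminf) measurable
  also have "\<dots> = (\<Sum>k. ennreal (2 * pi * (1/2)^k))"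
  proof (intro suminf_cong)
    fix k :: nat
    have "(\<integral>\<^sup>+z. ?f k z \<partial>lborel) = ennreal (2^(k+1)) * emeasure lborel (ball (0::real^2) ((1/2)^k))"
      by (simp add: nn_integral_cmult_indicator)
    also have "\<dots> = ennreal (2^(k+1) * (pi * ((1/2)^k)^2))"
      using emeasure_ball[of "(1/2::real)^k" "0::real^2"]
      by (simp add: unit_ball_vol_2 ennreal_mult'' mult.commute)
    also have "2^(k+1) * (pi * ((1/2::real)^k)^2) = 2 * pi * (1/2)^k"
    proof -
      have "(2::real)^k * (1/2)^k = 1" by (simp add: power_mult_distrib[symmetric])
      then show ?thesis by (simp add: power2_eq_square algebra_simps)
    qed
    finally show "(\<integral>\<^sup>+z. ?f k z \<partial>lborel) = ennreal (2 * pi * (1/2)^k)" .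
  qed
  also have "\<dots> = ennreal (\<Sum>k. 2 * pi * (1/2)^k)"
    by (intro suminf_ennreal2) (auto intro: summable_mult summable_geometric)
  also have "(\<Sum>k. 2 * pi * (1/2::real)^k) = 4 * pi"
    using suminf_mult[of "\<lambda>k. (1/2::real)^k" "2*pi"] suminf_geometric[of "1/2::real"]
      summable_geometric[of "1/2::real"]
    by simp
  finally show ?thesis .
qed

lemma integrable_inv_norm_ball:
  assumes "r \<le> 1"
  shows "integrable lborel (inv_norm_ball r :: real^2 \<Rightarrow> real)"
proof (rule Bochner_Integration.integrable_bound)
  show "integrable lborel (inv_norm_ball 1 :: real^2 \<Rightarrow> real)"
    using nn_integral_inv_norm_ball_1_le
    by (intro integrableI_bounded) (auto simp: inv_norm_ball_nonneg ennreal_less_top intro: le_less_trans)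
qed (use assms in \<open>auto simp: inv_norm_ball_nonneg inv_norm_ball_mono\<close>)

lemma integral_inv_norm_ball_mono:
  "r \<le> s \<Longrightarrow> s \<le> 1 \<Longrightarrow> integral\<^sup>L lborel (inv_norm_ball r :: real^2 \<Rightarrow> real) \<le> integral\<^sup>L lborel (inv_norm_ball s :: real^2 \<Rightarrow> real)"
  by (intro integral_mono integrable_inv_norm_ball inv_norm_ball_mono) auto

lemma integral_inv_norm_ball_small:
  assumes "0 < e"
  shows "\<exists>r>0. r \<le> 1 \<and> integral\<^sup>L lborel (inv_norm_ball r :: real^2 \<Rightarrow> real) < e"
proof -
  let ?r = "\<lambda>t::real. 1 / max 1 t"
  have "((\<lambda>t. integral\<^sup>L lborel (inv_norm_ball (?r t) :: real^2 \<Rightarrow> real))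
      \<longlongrightarrow> integral\<^sup>L lborel (\<lambda>_::real^2. 0::real)) at_top"
  proof (rule integral_dominated_convergence_at_top[where w="inv_norm_ball 1" and M=lborel
        and s="\<lambda>t. inv_norm_ball (?r t)" and f="\<lambda>_. 0"])
    show "AE z in lborel. ((\<lambda>t. inv_norm_ball (?r t) (z::real^2)) \<longlongrightarrow> 0) at_top"
    proof (rule AE_I2)
      fix z :: "real^2"
      have "eventually (\<lambda>t. inv_norm_ball (?r t) z = 0) at_top"
      proof (cases "z = 0")
        case False
        show ?thesis using eventually_ge_at_top[of "max 1 (1 / norm z)"]
          by eventually_elim (use False in \<open>auto simp: inv_norm_ball_def field_simps\<close>)
      qed (simp add: inv_norm_ball_def)
      then show "((\<lambda>t. inv_norm_ball (?r t) z) \<longlongrightarrow> 0) at_top" by (rule tendsto_eventually)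
    qed
    show "\<forall>\<^sub>F t in at_top. AE z in lborel. norm (inv_norm_ball (?r t) (z::real^2)) \<le> inv_norm_ball 1 z"
      by (intro always_eventually allI AE_I2) (auto simp: inv_norm_ball_nonneg inv_norm_ball_mono)
  qed (auto intro: integrable_inv_norm_ball)
  then have "((\<lambda>t. integral\<^sup>L lborel (inv_norm_ball (?r t) :: real^2 \<Rightarrow> real)) \<longlongrightarrow> 0) at_top"
    by simp
  then have "eventually (\<lambda>t. integral\<^sup>L lborel (inv_norm_ball (?r t) :: real^2 \<Rightarrow> real) < e) at_top"
    using assms by (auto simp: order_tendsto_iff)
  then obtain t where "integral\<^sup>L lborel (inv_norm_ball (?r t) :: real^2 \<Rightarrow> real) < e"
    by (auto dest: eventually_happens)
  then show ?thesis by (intro exI[of _ "?r t"]) auto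
qed

section \<open>The gradient of ln |z| and its truncations\<close>

definition grad_ln_norm :: "'a::real_inner \<Rightarrow> 'a" where
  "grad_ln_norm z = inverse (norm z ^ 2) *\<^sub>R z"

lemma grad_ln_norm_measurable [measurable]:
  "grad_ln_norm \<in> borel_measurable (borel :: 'a::euclidean_space measure)"
  unfolding grad_ln_norm_def by measurable

lemma norm_grad_ln_norm: "norm (grad_ln_norm z) = inverse (norm z)"
  by (cases "z = 0") (auto simp: grad_ln_norm_def power2_eq_square)

lemma abs_inner_grad_ln_norm_le: "\<bar>grad_ln_norm z \<bullet> h\<bar> \<le> inverse (norm z) * norm h"
  using Cauchy_Schwarz_ineq2[of "grad_ln_norm z" h] by (simp add: norm_grad_ln_norm)

lemma continuous_on_grad_ln_norm_diff: "continuous_on (- {a}) (\<lambda>x. grad_ln_norm (x - a))"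
  unfolding grad_ln_norm_def by (intro continuous_intros) auto

lemma has_derivative_ln_norm_diff:
  fixes x a :: "'a::real_inner"
  assumes "x \<noteq> a"
  shows "((\<lambda>x. ln (norm (x - a))) has_derivative (\<lambda>h. grad_ln_norm (x - a) \<bullet> h)) (at x within S)"
proof -
  have ne: "x - a \<noteq> 0" using assms by simp
  have "((\<lambda>x. norm (x - a)) has_derivative (\<lambda>h. h \<bullet> sgn (x - a))) (at x within S)"
    using has_derivative_compose[OF has_derivative_diff[OF has_derivative_ident has_derivative_const]
        has_derivative_norm[OF ne]] by simp
  then have "((\<lambda>x. ln (norm (x - a))) has_derivative (\<lambda>h. h \<bullet> sgn (x - a) * inverse (norm (x - a)))) (at x within S)"
    using ne by (intro has_derivative_ln) auto
  moreover have "(\<lambda>h. h \<bullet> sgn (x - a) * inverse (norm (x - a))) = (\<lambda>h. grad_ln_norm (x - a) \<bullet> h)"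
    by (simp add: grad_ln_norm_def sgn_div_norm power2_eq_square inner_commute divide_inverse ac_simps)
  ultimately show ?thesis by simp
qed

lemma has_real_derivative_ln_norm_line:
  fixes x h y :: "'a::real_inner"
  assumes "x + t *\<^sub>R h \<noteq> y"
  shows "((\<lambda>t. ln (norm (x + t *\<^sub>R h - y))) has_real_derivative (grad_ln_norm (x + t *\<^sub>R h - y) \<bullet> h)) (at t within S)"
proof -
  have "((\<lambda>t. x + t *\<^sub>R h) has_derivative (\<lambda>s. s *\<^sub>R h)) (at t within S)"
    by (auto intro!: derivative_eq_intros)
  from has_derivative_compose[OF this has_derivative_ln_norm_diff[OF assms]]
  show ?thesis by (simp add: has_field_derivative_def mult_commute_abs)
qed

definition grad_ln_norm_trunc :: "real \<Rightarrow> 'a::real_normed_vector \<Rightarrow> 'a" where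
  "grad_ln_norm_trunc d z = inverse ((max (norm z) d)^2) *\<^sub>R z"

lemma grad_ln_norm_trunc_measurable [measurable]:
  "grad_ln_norm_trunc d \<in> borel_measurable (borel :: 'a::euclidean_space measure)"
  unfolding grad_ln_norm_trunc_def by measurable

lemma norm_grad_ln_norm_trunc_le:
  assumes "0 < d"
  shows "norm (grad_ln_norm_trunc d z) \<le> inverse d"
proof -
  have "norm (grad_ln_norm_trunc d z) = norm z / (max (norm z) d)^2"
    by (simp add: grad_ln_norm_trunc_def field_simps)
  also have "\<dots> \<le> max (norm z) d / (max (norm z) d)^2"
    using assms by (intro divide_right_mono) auto
  also have "\<dots> = inverse (max (norm z) d)"
    using assms by (simp add: power2_eq_square field_simps)
  also have "\<dots> \<le> inverse d"
    using assms by (intro le_imp_inverse_le) auto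
  finally show ?thesis .
qed

lemma continuous_on_grad_ln_norm_trunc: "0 < d \<Longrightarrow> continuous_on UNIV (grad_ln_norm_trunc d)"
  unfolding grad_ln_norm_trunc_def by (intro continuous_intros) (auto simp: max_def)

lemma norm_grad_ln_norm_minus_trunc_le:
  fixes z :: "'a::real_inner"
  assumes "0 < d"
  shows "norm (grad_ln_norm z - grad_ln_norm_trunc d z) \<le> 2 * inv_norm_ball d z"
proof (cases "norm z < d \<and> z \<noteq> 0")
  case False
  then have "grad_ln_norm z = grad_ln_norm_trunc d z"
    by (auto simp: grad_ln_norm_def grad_ln_norm_trunc_def max_def)
  then show ?thesis by (simp add: inv_norm_ball_nonneg)
next
  case True
  have "norm (grad_ln_norm z - grad_ln_norm_trunc d z) \<le> inverse (norm z) + inverse d"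
    using norm_triangle_ineq4 norm_grad_ln_norm_trunc_le[OF assms, of z]
    by (metis add_left_mono norm_grad_ln_norm order.trans)
  also have "inverse d \<le> inverse (norm z)"
    using True by (intro le_imp_inverse_le) auto
  finally show ?thesis
    using True by (simp add: inv_norm_ball_def)
qed

text \<open>For \<open>r = 0\<close> this holds because \<open>ln 0 = 0\<close> and \<open>inverse 0 = 0\<close> in Isabelle.\<close>
lemma abs_ln_le_inverse: "0 \<le> r \<Longrightarrow> r < 1 \<Longrightarrow> \<bar>ln r\<bar> \<le> inverse (r::real)"
  using ln_le_minus_one[of "inverse r"] by (cases "r = 0") (auto simp: ln_inverse)

lemma abs_ln_le_twice_dist_1:
  fixes u :: real
  assumes "\<bar>u - 1\<bar> \<le> 1/2"
  shows "\<bar>ln u\<bar> \<le> 2 * \<bar>u - 1\<bar>"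
proof -
  have u: "1/2 \<le> u" using assms by linarith
  have upper: "ln u \<le> u - 1" using u by (intro ln_le_minus_one) auto
  have "- ln u = ln (inverse u)" using u by (simp add: ln_inverse)
  also have "\<dots> \<le> inverse u - 1" using u by (intro ln_le_minus_one) auto
  also have "\<dots> = (1 - u) / u" using u by (simp add: field_simps)
  also have "\<dots> \<le> 2 * \<bar>u - 1\<bar>"
  proof (cases "u \<le> 1")
    case True
    have "(1 - u) / u \<le> (1 - u) / (1/2)" using u True by (intro divide_left_mono) auto
    then show ?thesis using True by simp
  next
    case False
    then have "(1 - u) / u \<le> 0" by (simp add: divide_nonpos_pos)
    then show ?thesis by (rule order_trans) simp
  qed
  finally show ?thesis using upper by (auto simp: abs_le_iff abs_if)
qed

lemma abs_ln_norm_diff_le: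
  fixes x a :: "'a::real_normed_vector"
  assumes "2 * norm a \<le> norm x" "x \<noteq> 0"
  shows "\<bar>ln (norm (x - a)) - ln (norm x)\<bar> \<le> 2 * norm a / norm x"
proof -
  have x: "0 < norm x" using assms by simp
  have d: "\<bar>norm (x - a) - norm x\<bar> \<le> norm a" using norm_triangle_ineq3[of "x - a" x] by simp
  have pos: "0 < norm (x - a)" using d assms x by linarith
  have "norm (x - a) / norm x - 1 = (norm (x - a) - norm x) / norm x"
    using x by (simp add: diff_divide_distrib)
  then have "\<bar>norm (x - a) / norm x - 1\<bar> = \<bar>norm (x - a) - norm x\<bar> / norm x"
    by (simp add: abs_divide)
  also have "\<dots> \<le> norm a / norm x" using d x by (intro divide_right_mono) auto
  finally have u: "\<bar>norm (x - a) / norm x - 1\<bar> \<le> norm a / norm x" .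
  have "norm a / norm x \<le> 1/2" using assms x by (simp add: field_simps)
  then have "\<bar>ln (norm (x - a) / norm x)\<bar> \<le> 2 * \<bar>norm (x - a) / norm x - 1\<bar>"
    using u by (intro abs_ln_le_twice_dist_1) linarith
  then show ?thesis using u pos x by (simp add: ln_div)
qed

lemma abs_ln_norm_diff_le_ln:
  fixes x y :: "'a::real_normed_vector"
  assumes "1 \<le> norm (x - y)" "1 \<le> norm x"
  shows "\<bar>ln (norm (x - y)) - ln (norm x)\<bar> \<le> ln (1 + norm y)"
proof -
  have ln_prod: "ln (a * (1 + norm y)) = ln a + ln (1 + norm y)" if "1 \<le> a" for a
    using that by (intro ln_mult_pos) (auto intro: add_pos_nonneg)
  have "norm (x - y) \<le> norm x * (1 + norm y)"
    using norm_triangle_ineq4[of x y] mult_left_mono[of 1 "norm x" "norm y"] assms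
    by (simp add: algebra_simps)
  then have "ln (norm (x - y)) \<le> ln (norm x * (1 + norm y))"
    using assms by (intro ln_mono) auto
  then have "ln (norm (x - y)) \<le> ln (norm x) + ln (1 + norm y)"
    using assms ln_prod by simp
  moreover have "norm x \<le> norm (x - y) * (1 + norm y)"
    using norm_triangle_sub[of x y] mult_left_mono[of 1 "norm (x - y)" "norm y"] assms
    by (simp add: algebra_simps)
  then have "ln (norm x) \<le> ln (norm (x - y) * (1 + norm y))"
    using assms by (intro ln_mono) auto
  then have "ln (norm x) \<le> ln (norm (x - y)) + ln (1 + norm y)"
    using assms ln_prod by simp
  ultimately show ?thesis by linarith
qed

lemma ln_norm_minus_ln_norm_diff_tendsto_0:
  fixes a :: "'a::real_normed_vector"
  shows "((\<lambda>x. ln (norm x) - ln (norm (x - a))) \<longlongrightarrow> 0) at_infinity"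
  unfolding Lim_at_infinity
proof (intro allI impI)
  fix e :: real assume e: "0 < e"
  show "\<exists>b. \<forall>x. b \<le> norm x \<longrightarrow> dist (ln (norm x) - ln (norm (x - a))) 0 < e"
  proof (intro exI[of _ "max (2 * norm a + 1) (2 * norm a / e + 1)"] allI impI)
    fix x :: 'a assume "max (2 * norm a + 1) (2 * norm a / e + 1) \<le> norm x"
    then have x: "2 * norm a + 1 \<le> norm x" "2 * norm a < e * norm x"
      using e by (auto simp: field_simps)
    then have "\<bar>ln (norm (x - a)) - ln (norm x)\<bar> \<le> 2 * norm a / norm x"
      by (intro abs_ln_norm_diff_le) auto
    also have "\<dots> < e" using x by (subst pos_divide_less_eq) auto
    finally show "dist (ln (norm x) - ln (norm (x - a))) 0 < e"
      by (simp add: dist_real_def abs_minus_commute)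
  qed
qed

lemma mult_abs_ln_norm_le:
  fixes z :: "'a::real_normed_vector"
  assumes s: "0 \<le> s" "s \<le> 1" and z: "norm z < 1" and \<eta>: "0 < \<eta>" "\<eta> \<le> 1"
  shows "s * \<bar>ln (norm z)\<bar> \<le> inv_norm_ball \<eta> z + \<bar>ln \<eta>\<bar> * s"
proof (cases "norm z < \<eta>")
  case True
  have "s * \<bar>ln (norm z)\<bar> \<le> 1 * inverse (norm z)"
    using s z abs_ln_le_inverse[of "norm z"] by (intro mult_mono) auto
  moreover have "0 \<le> \<bar>ln \<eta>\<bar> * s" using s by simp
  ultimately show ?thesis using True by (simp add: inv_norm_ball_def)
next
  case False
  then have "0 < norm z" using \<eta> by linarith
  then have "ln \<eta> \<le> ln (norm z)" "ln (norm z) \<le> 0"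
    using False \<eta> z by (auto intro: ln_mono)
  then have "s * \<bar>ln (norm z)\<bar> \<le> s * \<bar>ln \<eta>\<bar>"
    using s by (intro mult_left_mono) auto
  then show ?thesis using inv_norm_ball_nonneg[of \<eta> z] by (simp add: mult.commute)
qed

lemma mult_abs_ln_norm_diff_le_near:
  fixes x y :: "'a::real_normed_vector"
  assumes s: "0 \<le> s" "s \<le> 1" and "norm (x - y) < 1" "1 \<le> norm x" and \<eta>: "0 < \<eta>" "\<eta> \<le> 1"
  shows "s * \<bar>ln (norm (x - y)) - ln (norm x)\<bar> \<le> inv_norm_ball \<eta> (x - y) + \<bar>ln \<eta>\<bar> * s + s * ln (2 + norm y)"
proof -
  have "norm x \<le> norm (x - y) + norm y" using norm_triangle_sub[of x y] by simp
  then have "0 \<le> ln (norm x)" "ln (norm x) \<le> ln (2 + norm y)"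
    using assms by (auto intro!: ln_mono)
  then have "\<bar>ln (norm (x - y)) - ln (norm x)\<bar> \<le> \<bar>ln (norm (x - y))\<bar> + ln (2 + norm y)"
    by linarith
  then have "s * \<bar>ln (norm (x - y)) - ln (norm x)\<bar> \<le> s * \<bar>ln (norm (x - y))\<bar> + s * ln (2 + norm y)"
    using s(1) by (metis distrib_left mult_left_mono)
  moreover have "s * \<bar>ln (norm (x - y))\<bar> \<le> inv_norm_ball \<eta> (x - y) + \<bar>ln \<eta>\<bar> * s"
    using assms by (intro mult_abs_ln_norm_le) auto
  ultimately show ?thesis by linarith
qed

text \<open>
  The four terms cover \<open>|y| < \<rho>\<close>, the tail \<open>|y| \<ge> \<rho>\<close>, and the disc \<open>|x - y| < 1\<close>,
  split once more at radius \<open>\<eta>\<close>.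
\<close>
lemma abs_mult_ln_norm_diff_le:
  fixes x y :: "'a::real_normed_vector"
  assumes s: "0 \<le> s" "s \<le> 1" and \<rho>: "1 \<le> \<rho>" "2 * \<rho> \<le> norm x" and \<eta>: "0 < \<eta>" "\<eta> \<le> 1"
  shows "\<bar>s * (ln (norm (x - y)) - ln (norm x))\<bar> \<le>
    s * (2 * \<rho> / norm x) + 2 * (s * ln (2 + norm y) * indicator {y. \<rho> \<le> norm y} y)
    + inv_norm_ball \<eta> (x - y) + \<bar>ln \<eta>\<bar> * (s * indicator {y. norm x - 1 \<le> norm y} y)"
  (is "_ \<le> ?B1 + ?B2 + ?B3 + ?B4")
proof -
  have x: "2 \<le> norm x" using \<rho> by linarith
  have nonneg: "0 \<le> ?B1" "0 \<le> ?B2" "0 \<le> ?B3" "0 \<le> ?B4"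
    using s x \<rho> by (simp_all add: inv_norm_ball_nonneg indicator_def)
  have abs_eq: "\<bar>s * (ln (norm (x - y)) - ln (norm x))\<bar> = s * \<bar>ln (norm (x - y)) - ln (norm x)\<bar>"
    using s by (simp add: abs_mult)
  consider "norm y < \<rho>" | "\<rho> \<le> norm y" "1 \<le> norm (x - y)" | "\<rho> \<le> norm y" "norm (x - y) < 1"
    by linarith
  then show ?thesis
  proof cases
    case 1
    have "\<bar>ln (norm (x - y)) - ln (norm x)\<bar> \<le> 2 * norm y / norm x"
      using 1 \<rho> x by (intro abs_ln_norm_diff_le) auto
    also have "\<dots> \<le> 2 * \<rho> / norm x"
      using 1 x by (intro divide_right_mono) auto
    finally have "\<bar>s * (ln (norm (x - y)) - ln (norm x))\<bar> \<le> ?B1"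
      unfolding abs_eq using s(1) by (rule mult_left_mono)
    then show ?thesis using nonneg by linarith
  next
    case 2
    have "\<bar>ln (norm (x - y)) - ln (norm x)\<bar> \<le> ln (1 + norm y)"
      using 2 x by (intro abs_ln_norm_diff_le_ln) auto
    also have "\<dots> \<le> ln (2 + norm y)" by (intro ln_mono) (auto intro: add_pos_nonneg)
    finally have "\<bar>s * (ln (norm (x - y)) - ln (norm x))\<bar> \<le> s * ln (2 + norm y)"
      unfolding abs_eq using s(1) by (rule mult_left_mono)
    moreover have "?B2 = 2 * (s * ln (2 + norm y))" using 2 by simp
    moreover have "0 \<le> s * ln (2 + norm y)" using s by simp
    ultimately show ?thesis using nonneg by linarith
  next
    case 3
    have "norm x \<le> norm (x - y) + norm y" using norm_triangle_sub[of x y] by simp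
    then have "?B2 = 2 * (s * ln (2 + norm y))" "?B4 = \<bar>ln \<eta>\<bar> * s"
      using 3 by simp_all
    moreover have "0 \<le> s * ln (2 + norm y)" using s by simp
    moreover have "s * \<bar>ln (norm (x - y)) - ln (norm x)\<bar> \<le> ?B3 + \<bar>ln \<eta>\<bar> * s + s * ln (2 + norm y)"
      using 3 s x \<eta> by (intro mult_abs_ln_norm_diff_le_near) auto
    ultimately show ?thesis using abs_eq nonneg(1) by linarith
  qed
qed

lemma V_nuc_plus_ln_tendsto_0: "((\<lambda>x. V_nuc K xs x + real K * ln (norm x)) \<longlongrightarrow> 0) at_infinity"
proof -
  have "((\<lambda>x. \<Sum>i<K. ln (norm x) - ln (norm (x - xs i))) \<longlongrightarrow> (\<Sum>i<K. 0)) at_infinity"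
    by (intro tendsto_sum ln_norm_minus_ln_norm_diff_tendsto_0)
  then show ?thesis by (simp add: V_nuc_def sum_subtractf)
qed

lemma has_derivative_V_nuc:
  assumes "x \<notin> xs ` {..<K}"
  shows "(V_nuc K xs has_derivative (\<lambda>h. - (\<Sum>i<K. grad_ln_norm (x - xs i)) \<bullet> h)) (at x)"
proof -
  have "((\<lambda>x. - (\<Sum>i<K. ln (norm (x - xs i)))) has_derivative (\<lambda>h. - (\<Sum>i<K. grad_ln_norm (x - xs i) \<bullet> h))) (at x)"
    using assms by (intro has_derivative_minus has_derivative_sum has_derivative_ln_norm_diff) auto
  then show ?thesis unfolding V_nuc_def[abs_def] by (simp add: inner_sum_left)
qed

definition potential_grad ::
    "nat \<Rightarrow> (nat \<Rightarrow> real^2) \<Rightarrow> ((real^2) \<Rightarrow> (real^2)) \<Rightarrow> (real^2) \<Rightarrow> ((real^2) \<Rightarrow>\<^sub>L real)" where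
  "potential_grad K xs G x = blinfun_inner_right (G x - (\<Sum>i<K. grad_ln_norm (x - xs i)))"

section \<open>Logarithmic potentials of bounded densities\<close>

locale borel_density =
  fixes \<sigma> :: "real^2 \<Rightarrow> real"
  assumes measurable_density [measurable]: "\<sigma> \<in> borel_measurable borel"
    and density_nonneg: "\<And>x. 0 \<le> \<sigma> x" and density_le_1: "\<And>x. \<sigma> x \<le> 1"
    and integrable_log_weight: "integrable lborel (\<lambda>x. \<sigma> x * ln (2 + norm x))"
begin

lemma integrable_density: "integrable lborel \<sigma>"
proof (rule Bochner_Integration.integrable_bound)
  show "integrable lborel (\<lambda>x. \<sigma> x * ln (2 + norm x) / ln 2)"
    using integrable_log_weight by (rule integrable_divide)
  show "AE x in lborel. norm (\<sigma> x) \<le> norm (\<sigma> x * ln (2 + norm x) / ln 2)"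
  proof (rule AE_I2)
    fix x :: "real^2"
    have "ln 2 \<le> ln (2 + norm x)" by (intro ln_mono) auto
    then have "1 \<le> ln (2 + norm x) / ln 2" by simp
    then have "\<sigma> x * 1 \<le> \<sigma> x * (ln (2 + norm x) / ln 2)"
      using density_nonneg[of x] by (intro mult_left_mono) auto
    then show "norm (\<sigma> x) \<le> norm (\<sigma> x * ln (2 + norm x) / ln 2)"
      using density_nonneg[of x] by simp
  qed
qed simp

definition inv_dist_bound :: real where
  "inv_dist_bound = integral\<^sup>L lborel (inv_norm_ball 1 :: real^2 \<Rightarrow> real) + integral\<^sup>L lborel \<sigma>"

lemma density_mult_inverse_dist_le: "\<sigma> y * inverse (norm (w - y)) \<le> inv_norm_ball 1 (w - y) + \<sigma> y"
proof (cases "norm (w - y) < 1")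
  case True
  have "\<sigma> y * inverse (norm (w - y)) \<le> 1 * inverse (norm (w - y))"
    using density_le_1[of y] by (intro mult_right_mono) auto
  then show ?thesis using True density_nonneg[of y] by (simp add: inv_norm_ball_def)
next
  case False
  have "\<sigma> y * inverse (norm (w - y)) \<le> \<sigma> y * 1"
    using density_nonneg[of y] False by (intro mult_left_mono) (auto simp: inverse_le_1_iff)
  then show ?thesis using inv_norm_ball_nonneg[of 1 "w - y"] by simp
qed

lemma integrable_inv_norm_ball_1_reflect: "integrable lborel (\<lambda>y. inv_norm_ball 1 (w - y :: real^2))"
  by (rule integrable_reflect_lborel) (auto simp: integrable_inv_norm_ball)

lemma integrable_density_mult_inverse_dist: "integrable lborel (\<lambda>y. \<sigma> y * inverse (norm (w - y)))"
proof (rule Bochner_Integration.integrable_bound)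
  show "integrable lborel (\<lambda>y. inv_norm_ball 1 (w - y) + \<sigma> y)"
    by (intro Bochner_Integration.integrable_add integrable_density integrable_inv_norm_ball_1_reflect)
  show "AE y in lborel. norm (\<sigma> y * inverse (norm (w - y))) \<le> norm (inv_norm_ball 1 (w - y) + \<sigma> y)"
    using density_mult_inverse_dist_le density_nonneg inv_norm_ball_nonneg
    by (intro AE_I2) (auto simp: abs_mult intro: order_trans[OF _ abs_ge_self])
qed simp

lemma integral_density_mult_inverse_dist_le: "(\<integral>y. \<sigma> y * inverse (norm (w - y)) \<partial>lborel) \<le> inv_dist_bound"
proof -
  have "(\<integral>y. \<sigma> y * inverse (norm (w - y)) \<partial>lborel) \<le> (\<integral>y. inv_norm_ball 1 (w - y) + \<sigma> y \<partial>lborel)"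
    by (intro integral_mono integrable_density_mult_inverse_dist Bochner_Integration.integrable_add
        integrable_density integrable_inv_norm_ball_1_reflect density_mult_inverse_dist_le)
  also have "\<dots> = inv_dist_bound"
    by (simp add: inv_dist_bound_def integral_reflect_lborel integrable_density
        integrable_inv_norm_ball_1_reflect)
  finally show ?thesis .
qed

definition log_potential :: "real^2 \<Rightarrow> real" where
  "log_potential x = (\<integral>y. \<sigma> y * ln (norm (x - y)) \<partial>lborel)"

definition log_potential_grad :: "real^2 \<Rightarrow> real^2" where
  "log_potential_grad w = (\<integral>y. \<sigma> y *\<^sub>R grad_ln_norm (w - y) \<partial>lborel)"

definition log_potential_grad_trunc :: "real \<Rightarrow> real^2 \<Rightarrow> real^2" where
  "log_potential_grad_trunc d w = (\<integral>y. \<sigma> y *\<^sub>R grad_ln_norm_trunc d (w - y) \<partial>lborel)"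

lemma integrable_grad_kernel: "integrable lborel (\<lambda>y. \<sigma> y *\<^sub>R grad_ln_norm (w - y))"
  by (rule Bochner_Integration.integrable_bound[OF integrable_density_mult_inverse_dist[of w]])
     (auto simp: norm_grad_ln_norm density_nonneg abs_mult)

lemma integrable_grad_trunc_kernel:
  assumes "0 < d"
  shows "integrable lborel (\<lambda>y. \<sigma> y *\<^sub>R grad_ln_norm_trunc d (w - y))"
proof (rule Bochner_Integration.integrable_bound)
  show "integrable lborel (\<lambda>y. \<sigma> y * inverse d)" by (intro integrable_mult_left integrable_density)
  show "AE y in lborel. norm (\<sigma> y *\<^sub>R grad_ln_norm_trunc d (w - y)) \<le> norm (\<sigma> y * inverse d)"
    using norm_grad_ln_norm_trunc_le[OF assms] density_nonneg assms
    by (intro AE_I2) (auto simp: abs_mult intro!: mult_left_mono)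
qed simp

lemma continuous_on_log_potential_grad_trunc:
  assumes "0 < d"
  shows "continuous_on UNIV (log_potential_grad_trunc d)"
  unfolding log_potential_grad_trunc_def
proof (rule continuous_on_integral_dominated[where w="\<lambda>y. \<sigma> y * inverse d"])
  show "integrable lborel (\<lambda>y. \<sigma> y * inverse d)" by (intro integrable_mult_left integrable_density)
  show "norm (\<sigma> y *\<^sub>R grad_ln_norm_trunc d (x - y)) \<le> \<sigma> y * inverse d" for x y
    using norm_grad_ln_norm_trunc_le[OF assms] density_nonneg assms
    by (auto simp: abs_mult intro!: mult_left_mono)
  show "continuous_on UNIV (\<lambda>x. \<sigma> y *\<^sub>R grad_ln_norm_trunc d (x - y))" for y
    by (intro continuous_intros continuous_on_compose2[OF continuous_on_grad_ln_norm_trunc[OF assms]]) auto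
qed simp

lemma dist_log_potential_grad_trunc_le:
  assumes "0 < d" "d \<le> 1"
  shows "dist (log_potential_grad_trunc d w) (log_potential_grad w) \<le> 2 * integral\<^sup>L lborel (inv_norm_ball d :: real^2 \<Rightarrow> real)"
proof -
  have "dist (log_potential_grad_trunc d w) (log_potential_grad w)
      = norm (\<integral>y. \<sigma> y *\<^sub>R (grad_ln_norm_trunc d (w - y) - grad_ln_norm (w - y)) \<partial>lborel)"
    unfolding log_potential_grad_trunc_def log_potential_grad_def dist_norm scaleR_diff_right
    by (subst Bochner_Integration.integral_diff)
       (auto intro: integrable_grad_kernel integrable_grad_trunc_kernel assms)
  also have "\<dots> \<le> (\<integral>y. 2 * inv_norm_ball d (w - y) \<partial>lborel)"
  proof (rule Bochner_Integration.integral_norm_bound_integral)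
    show "integrable lborel (\<lambda>y. \<sigma> y *\<^sub>R (grad_ln_norm_trunc d (w - y) - grad_ln_norm (w - y)))"
      using Bochner_Integration.integrable_diff[OF integrable_grad_trunc_kernel[OF assms(1)] integrable_grad_kernel]
      by (simp add: scaleR_diff_right)
    show "integrable lborel (\<lambda>y. 2 * inv_norm_ball d (w - y))"
      by (intro integrable_mult_right integrable_reflect_lborel integrable_inv_norm_ball assms) auto
    show "norm (\<sigma> y *\<^sub>R (grad_ln_norm_trunc d (w - y) - grad_ln_norm (w - y))) \<le> 2 * inv_norm_ball d (w - y)" for y
    proof -
      have "norm (\<sigma> y *\<^sub>R (grad_ln_norm_trunc d (w - y) - grad_ln_norm (w - y)))
          = \<sigma> y * norm (grad_ln_norm (w - y) - grad_ln_norm_trunc d (w - y))"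
        using density_nonneg[of y] by (simp add: norm_minus_commute)
      also have "\<dots> \<le> 1 * (2 * inv_norm_ball d (w - y))"
        using density_nonneg[of y] density_le_1[of y] norm_grad_ln_norm_minus_trunc_le[OF assms(1)]
        by (intro mult_mono) auto
      finally show ?thesis by simp
    qed
  qed
  also have "\<dots> = 2 * integral\<^sup>L lborel (inv_norm_ball d :: real^2 \<Rightarrow> real)"
    by (simp add: integral_reflect_lborel)
  finally show ?thesis .
qed

text \<open>
  The truncated kernels are bounded and continuous, and they differ from \<open>grad_ln_norm\<close> only
  on a small disc, by at most twice \<open>inv_norm_ball d\<close>; so the gradient is a uniform limit of
  continuous functions.
\<close>
lemma continuous_on_log_potential_grad: "continuous_on UNIV log_potential_grad"
proof (rule uniform_limit_theorem)
  show "\<forall>\<^sub>F n in sequentially. continuous_on UNIV (log_potential_grad_trunc (1 / Suc n))"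
    by (intro always_eventually allI continuous_on_log_potential_grad_trunc) auto
  show "uniform_limit UNIV (\<lambda>n. log_potential_grad_trunc (1 / Suc n)) log_potential_grad sequentially"
  proof (rule uniform_limitI)
    fix e :: real assume "0 < e"
    then obtain r where r: "0 < r" "r \<le> 1" "integral\<^sup>L lborel (inv_norm_ball r :: real^2 \<Rightarrow> real) < e / 2"
      using integral_inv_norm_ball_small[of "e/2"] by auto
    obtain N :: nat where N: "inverse r < N" using reals_Archimedean2 by blast
    show "\<forall>\<^sub>F n in sequentially. \<forall>x\<in>UNIV. dist (log_potential_grad_trunc (1 / Suc n) x) (log_potential_grad x) < e"
    proof (rule eventually_sequentiallyI[of N], intro ballI)
      fix n x assume "N \<le> n"
      then have "inverse r < Suc n" using N by linarith
      then have "1 / real (Suc n) \<le> r" using r by (simp add: field_simps)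
      then have "integral\<^sup>L lborel (inv_norm_ball (1 / Suc n) :: real^2 \<Rightarrow> real) < e / 2"
        using r integral_inv_norm_ball_mono[of "1 / Suc n" r] by linarith
      then show "dist (log_potential_grad_trunc (1 / Suc n) x) (log_potential_grad x) < e"
        using dist_log_potential_grad_trunc_le[of "1 / Suc n" x] by simp
    qed
  qed
qed auto

lemma norm_log_potential_grad_le: "norm (log_potential_grad w) \<le> inv_dist_bound"
proof -
  have "norm (log_potential_grad w) \<le> (\<integral>y. norm (\<sigma> y *\<^sub>R grad_ln_norm (w - y)) \<partial>lborel)"
    unfolding log_potential_grad_def by (rule integral_norm_bound)
  also have "\<dots> = (\<integral>y. \<sigma> y * inverse (norm (w - y)) \<partial>lborel)"
    using density_nonneg by (simp add: norm_grad_ln_norm)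
  finally show ?thesis by (rule order_trans[OF _ integral_density_mult_inverse_dist_le])
qed

lemma log_potential_grad_measurable [measurable]: "log_potential_grad \<in> borel_measurable borel"
  using continuous_on_log_potential_grad by (rule borel_measurable_continuous_onI)

lemma abs_log_kernel_le:
  "\<bar>\<sigma> y * ln (norm (x - y))\<bar> \<le> inv_norm_ball 1 (x - y) + \<sigma> y * ln (2 + norm x) + \<sigma> y * ln (2 + norm y)"
proof (cases "norm (x - y) < 1")
  case True
  have "\<bar>\<sigma> y * ln (norm (x - y))\<bar> = \<sigma> y * \<bar>ln (norm (x - y))\<bar>"
    using density_nonneg[of y] by (simp add: abs_mult)
  also have "\<dots> \<le> 1 * inverse (norm (x - y))"
    using density_nonneg[of y] density_le_1[of y] abs_ln_le_inverse[of "norm (x - y)"] True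
    by (intro mult_mono) auto
  finally have "\<bar>\<sigma> y * ln (norm (x - y))\<bar> \<le> inverse (norm (x - y))" by simp
  moreover have "0 \<le> \<sigma> y * ln (2 + norm x)" "0 \<le> \<sigma> y * ln (2 + norm y)"
    using density_nonneg[of y] by simp_all
  ultimately show ?thesis using True by (simp add: inv_norm_ball_def)
next
  case False
  have "norm (x - y) \<le> norm x + norm y" by (rule norm_triangle_ineq4)
  also have "\<dots> \<le> (2 + norm x) * (2 + norm y)" by (simp add: algebra_simps add_increasing)
  finally have "norm (x - y) \<le> (2 + norm x) * (2 + norm y)" .
  then have "ln (norm (x - y)) \<le> ln ((2 + norm x) * (2 + norm y))"
    using False by (intro ln_mono) auto
  also have "\<dots> = ln (2 + norm x) + ln (2 + norm y)"
    by (intro ln_mult_pos) (auto intro: add_pos_nonneg)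
  finally have "ln (norm (x - y)) \<le> ln (2 + norm x) + ln (2 + norm y)" .
  then have "\<sigma> y * ln (norm (x - y)) \<le> \<sigma> y * (ln (2 + norm x) + ln (2 + norm y))"
    using density_nonneg[of y] by (intro mult_left_mono) auto
  then show ?thesis
    using False density_nonneg[of y] inv_norm_ball_nonneg[of 1 "x - y"]
    by (simp add: abs_mult algebra_simps)
qed

lemma integrable_log_kernel: "integrable lborel (\<lambda>y. \<sigma> y * ln (norm (x - y)))"
proof (rule Bochner_Integration.integrable_bound)
  show "integrable lborel (\<lambda>y. inv_norm_ball 1 (x - y) + \<sigma> y * ln (2 + norm x) + \<sigma> y * ln (2 + norm y))"
    by (intro Bochner_Integration.integrable_add integrable_inv_norm_ball_1_reflect
        integrable_log_weight integrable_mult_left integrable_density)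
  show "AE y in lborel. norm (\<sigma> y * ln (norm (x - y)))
      \<le> norm (inv_norm_ball 1 (x - y) + \<sigma> y * ln (2 + norm x) + \<sigma> y * ln (2 + norm y))"
    by (intro AE_I2) (auto intro: order_trans[OF abs_log_kernel_le abs_ge_self])
qed simp

lemma norm_inner_grad_kernel_le:
  "norm (\<sigma> y * (grad_ln_norm (w - y) \<bullet> h)) \<le> \<sigma> y * inverse (norm (w - y)) * norm h"
  using density_nonneg[of y] abs_inner_grad_ln_norm_le[of "w - y" h]
  by (simp add: abs_mult mult.assoc mult_left_mono)

lemma integrable_inner_grad_kernel: "integrable lborel (\<lambda>y. \<sigma> y * (grad_ln_norm (w - y) \<bullet> h))"
proof (rule Bochner_Integration.integrable_bound)
  show "integrable lborel (\<lambda>y. \<sigma> y * inverse (norm (w - y)) * norm h)"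
    by (intro integrable_mult_left integrable_density_mult_inverse_dist)
  show "AE y in lborel. norm (\<sigma> y * (grad_ln_norm (w - y) \<bullet> h)) \<le> norm (\<sigma> y * inverse (norm (w - y)) * norm h)"
    by (intro AE_I2) (metis norm_inner_grad_kernel_le abs_ge_self order_trans real_norm_def)
qed simp

lemma integral_norm_inner_grad_kernel_le:
  "(\<integral>y. norm (\<sigma> y * (grad_ln_norm (w - y) \<bullet> h)) \<partial>lborel) \<le> norm h * inv_dist_bound"
proof -
  have "(\<integral>y. norm (\<sigma> y * (grad_ln_norm (w - y) \<bullet> h)) \<partial>lborel)
      \<le> (\<integral>y. \<sigma> y * inverse (norm (w - y)) * norm h \<partial>lborel)"
    by (intro integral_mono integrable_norm integrable_inner_grad_kernel integrable_mult_left
        integrable_density_mult_inverse_dist norm_inner_grad_kernel_le)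
  also have "\<dots> = norm h * (\<integral>y. \<sigma> y * inverse (norm (w - y)) \<partial>lborel)"
    by (simp add: mult.commute)
  also have "\<dots> \<le> norm h * inv_dist_bound"
    by (intro mult_left_mono integral_density_mult_inverse_dist_le) auto
  finally show ?thesis .
qed

lemma inner_log_potential_grad:
  "log_potential_grad w \<bullet> h = (\<integral>y. \<sigma> y * (grad_ln_norm (w - y) \<bullet> h) \<partial>lborel)"
  unfolding log_potential_grad_def
  by (subst integral_inner_left[symmetric]) (auto simp: integrable_grad_kernel)

lemma integrable_line_grad_kernel:
  "integrable (lborel \<Otimes>\<^sub>M lborel)
     (\<lambda>(t, y). indicator {0..1::real} t * (\<sigma> y * (grad_ln_norm (x + t *\<^sub>R h - y) \<bullet> h)))"
proof (rule lborel_pair.Fubini_integrable, simp_all only: prod.case)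
  show "integrable lborel (\<lambda>t. \<integral>y. norm (indicator {0..1::real} t * (\<sigma> y * (grad_ln_norm (x + t *\<^sub>R h - y) \<bullet> h))) \<partial>lborel)"
  proof (rule Bochner_Integration.integrable_bound)
    show "integrable lborel (\<lambda>t::real. indicator {0..1} t * (norm h * inv_dist_bound))"
      by (intro integrable_mult_left integrable_real_indicator) auto
    show "AE t in lborel. norm (\<integral>y. norm (indicator {0..1::real} t * (\<sigma> y * (grad_ln_norm (x + t *\<^sub>R h - y) \<bullet> h))) \<partial>lborel)
        \<le> norm (indicator {0..1} t * (norm h * inv_dist_bound))"
    proof (intro AE_I2)
      fix t :: real
      have "(\<integral>y. norm (indicator {0..1::real} t * (\<sigma> y * (grad_ln_norm (x + t *\<^sub>R h - y) \<bullet> h))) \<partial>lborel)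
          = indicator {0..1} t * (\<integral>y. norm (\<sigma> y * (grad_ln_norm (x + t *\<^sub>R h - y) \<bullet> h)) \<partial>lborel)"
        by (simp add: abs_mult)
      also have "\<dots> \<le> indicator {0..1} t * (norm h * inv_dist_bound)"
        by (intro mult_left_mono integral_norm_inner_grad_kernel_le) auto
      finally show "norm (\<integral>y. norm (indicator {0..1::real} t * (\<sigma> y * (grad_ln_norm (x + t *\<^sub>R h - y) \<bullet> h))) \<partial>lborel)
          \<le> norm (indicator {0..1} t * (norm h * inv_dist_bound))"
        by simp
    qed
  qed measurable
qed (auto simp: integrable_inner_grad_kernel)

lemma log_potential_diff_eq_line_integral:
  "log_potential (x + h) - log_potential x = (\<integral>t. indicator {0..1} t * (log_potential_grad (x + t *\<^sub>R h) \<bullet> h) \<partial>lborel)"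
proof -
  define F where "F t y = indicator {0..1::real} t * (\<sigma> y * (grad_ln_norm (x + t *\<^sub>R h - y) \<bullet> h))" for t y
  have "log_potential (x + h) - log_potential x
      = (\<integral>y. \<sigma> y * (ln (norm (x + h - y)) - ln (norm (x - y))) \<partial>lborel)"
    unfolding log_potential_def
    by (subst Bochner_Integration.integral_diff[symmetric]) (auto intro: integrable_log_kernel simp: algebra_simps)
  also have "\<dots> = (\<integral>y. (\<integral>t. F t y \<partial>lborel) \<partial>lborel)"
  proof (rule integral_cong_AE)
    have "AE y in lborel. \<forall>t::real. x + t *\<^sub>R h \<noteq> y"
      using AE_lborel_not_on_line[of x h] by simp
    then show "AE y in lborel. \<sigma> y * (ln (norm (x + h - y)) - ln (norm (x - y))) = (\<integral>t. F t y \<partial>lborel)"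
    proof eventually_elim
      case (elim y)
      \<comment> \<open>fundamental theorem of calculus along the segment from \<open>x\<close> to \<open>x + h\<close>, which avoids \<open>y\<close>\<close>
      have "(\<integral>t. indicator {0..1} t *\<^sub>R (grad_ln_norm (x + t *\<^sub>R h - y) \<bullet> h) \<partial>lborel)
          = ln (norm (x + 1 *\<^sub>R h - y)) - ln (norm (x + 0 *\<^sub>R h - y))"
        using elim by (intro integral_FTC_atLeastAtMost has_real_derivative_ln_norm_line
            [THEN has_real_derivative_iff_has_vector_derivative[THEN iffD1]])
          (auto simp: grad_ln_norm_def intro!: continuous_intros)
      then show ?case by (simp add: F_def mult.left_commute)
    qed
  qed (unfold F_def, measurable)
  also have "\<dots> = (\<integral>t. (\<integral>y. F t y \<partial>lborel) \<partial>lborel)"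
    using integrable_line_grad_kernel[of x h] unfolding F_def
    by (intro lborel_pair.Fubini_integral) auto
  also have "\<dots> = (\<integral>t. indicator {0..1} t * (log_potential_grad (x + t *\<^sub>R h) \<bullet> h) \<partial>lborel)"
    by (simp add: F_def inner_log_potential_grad)
  finally show ?thesis .
qed

lemma has_derivative_log_potential:
  "(log_potential has_derivative (\<lambda>h. log_potential_grad x \<bullet> h)) (at x)"
  using continuous_on_log_potential_grad
  by (intro has_derivative_of_line_integral[OF log_potential_diff_eq_line_integral
        log_potential_grad_measurable norm_log_potential_grad_le])
     (simp add: continuous_on_eq_continuous_at)

lemma abs_log_potential_minus_mass_ln_le:
  assumes \<rho>: "1 \<le> \<rho>" "2 * \<rho> \<le> norm x" and \<eta>: "0 < \<eta>" "\<eta> \<le> 1"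
  shows "\<bar>log_potential x - integral\<^sup>L lborel \<sigma> * ln (norm x)\<bar> \<le>
    integral\<^sup>L lborel \<sigma> * (2 * \<rho> / norm x)
    + 2 * (\<integral>y. \<sigma> y * ln (2 + norm y) * indicator {y. \<rho> \<le> norm y} y \<partial>lborel)
    + integral\<^sup>L lborel (inv_norm_ball \<eta> :: real^2 \<Rightarrow> real)
    + \<bar>ln \<eta>\<bar> * (\<integral>y. \<sigma> y * indicator {y. norm x - 1 \<le> norm y} y \<partial>lborel)"
proof -
  define B where "B y = \<sigma> y * (2 * \<rho> / norm x)
    + 2 * (\<sigma> y * ln (2 + norm y) * indicator {y. \<rho> \<le> norm y} y)
    + inv_norm_ball \<eta> (x - y) + \<bar>ln \<eta>\<bar> * (\<sigma> y * indicator {y. norm x - 1 \<le> norm y} y)" for y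
  have int_tail: "integrable lborel (\<lambda>y. \<sigma> y * ln (2 + norm y) * indicator {y. \<rho> \<le> norm y} y)"
    "integrable lborel (\<lambda>y. \<sigma> y * indicator {y. norm x - 1 \<le> norm y} y)"
    by (intro integrable_real_mult_indicator integrable_log_weight integrable_density; measurable)+
  have int_ball: "integrable lborel (\<lambda>y. inv_norm_ball \<eta> (x - y))"
    using \<eta> by (intro integrable_reflect_lborel integrable_inv_norm_ball) auto
  have "log_potential x - integral\<^sup>L lborel \<sigma> * ln (norm x)
      = (\<integral>y. \<sigma> y * ln (norm (x - y)) - \<sigma> y * ln (norm x) \<partial>lborel)"
    unfolding log_potential_def
    by (subst Bochner_Integration.integral_diff) (auto intro: integrable_log_kernel integrable_mult_left integrable_density)
  also have "\<dots> = (\<integral>y. \<sigma> y * (ln (norm (x - y)) - ln (norm x)) \<partial>lborel)"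
    by (simp add: algebra_simps)
  also have "\<bar>\<dots>\<bar> \<le> (\<integral>y. B y \<partial>lborel)"
    unfolding real_norm_def[symmetric]
  proof (rule Bochner_Integration.integral_norm_bound_integral)
    show "integrable lborel (\<lambda>y. \<sigma> y * (ln (norm (x - y)) - ln (norm x)))"
      using Bochner_Integration.integrable_diff[OF integrable_log_kernel[of x]
          integrable_mult_left[OF integrable_density, of "ln (norm x)"]]
      by (simp add: algebra_simps)
    show "integrable lborel B"
      unfolding B_def
      by (intro Bochner_Integration.integrable_add integrable_mult_left integrable_mult_right
          integrable_density int_tail int_ball)
    show "norm (\<sigma> y * (ln (norm (x - y)) - ln (norm x))) \<le> B y" for y
      unfolding B_def real_norm_def
      by (rule abs_mult_ln_norm_diff_le) (use density_nonneg density_le_1 \<rho> \<eta> in auto)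
  qed
  also have "\<dots> = integral\<^sup>L lborel \<sigma> * (2 * \<rho> / norm x)
    + 2 * (\<integral>y. \<sigma> y * ln (2 + norm y) * indicator {y. \<rho> \<le> norm y} y \<partial>lborel)
    + integral\<^sup>L lborel (inv_norm_ball \<eta> :: real^2 \<Rightarrow> real)
    + \<bar>ln \<eta>\<bar> * (\<integral>y. \<sigma> y * indicator {y. norm x - 1 \<le> norm y} y \<partial>lborel)"
    unfolding B_def
    by (simp add: int_tail int_ball integrable_density Bochner_Integration.integrable_add
        integral_reflect_lborel)
  finally show ?thesis .
qed

lemma log_potential_minus_mass_ln_tendsto_0:
  "((\<lambda>x. log_potential x - integral\<^sup>L lborel \<sigma> * ln (norm x)) \<longlongrightarrow> 0) at_infinity"
  unfolding Lim_at_infinity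
proof (intro allI impI)
  fix \<epsilon> :: real assume "0 < \<epsilon>"
  define e where "e = \<epsilon> / 5"
  have e: "0 < e" using \<open>0 < \<epsilon>\<close> by (simp add: e_def)
  define m where "m = integral\<^sup>L lborel \<sigma>"
  obtain \<rho>0 where \<rho>0: "\<And>R. \<rho>0 \<le> R \<Longrightarrow> \<bar>\<integral>y. \<sigma> y * ln (2 + norm y) * indicator {y. R \<le> norm y} y \<partial>lborel\<bar> < e"
    using integral_tail_small[OF integrable_log_weight e] by blast
  define \<rho> where "\<rho> = max 1 \<rho>0"
  have "1 \<le> \<rho>" by (simp add: \<rho>_def)
  obtain \<eta> where \<eta>: "0 < \<eta>" "\<eta> \<le> 1" "integral\<^sup>L lborel (inv_norm_ball \<eta> :: real^2 \<Rightarrow> real) < e"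
    using integral_inv_norm_ball_small[OF e] by auto
  define e' where "e' = e / (\<bar>ln \<eta>\<bar> + 1)"
  have e': "0 < e'" "\<bar>ln \<eta>\<bar> * e' \<le> e"
    using e by (auto simp: e'_def field_simps)
  obtain R0 where R0: "\<And>R. R0 \<le> R \<Longrightarrow> \<bar>\<integral>y. \<sigma> y * indicator {y. R \<le> norm y} y \<partial>lborel\<bar> < e'"
    using integral_tail_small[OF integrable_density e'(1)] by blast
  show "\<exists>b. \<forall>x. b \<le> norm x \<longrightarrow> dist (log_potential x - integral\<^sup>L lborel \<sigma> * ln (norm x)) 0 < \<epsilon>"
  proof (intro exI[of _ "max (2 * \<rho>) (max (R0 + 1) (2 * \<rho> * m / e + 1))"] allI impI)
    fix x :: "real^2" assume "max (2 * \<rho>) (max (R0 + 1) (2 * \<rho> * m / e + 1)) \<le> norm x"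
    then have x: "2 * \<rho> \<le> norm x" "R0 \<le> norm x - 1" "2 * \<rho> * m < e * norm x"
      using e by (auto simp: field_simps)
    have "0 < norm x" using x(1) \<open>1 \<le> \<rho>\<close> by linarith
    then have "m * (2 * \<rho> / norm x) < e"
      using x(3) by (simp add: pos_divide_less_eq ac_simps)
    moreover have "(\<integral>y. \<sigma> y * ln (2 + norm y) * indicator {y. \<rho> \<le> norm y} y \<partial>lborel) < e"
      using \<rho>0[of \<rho>] by (simp add: \<rho>_def)
    moreover have "(\<integral>y. \<sigma> y * indicator {y. norm x - 1 \<le> norm y} y \<partial>lborel) \<le> e'"
      using R0[OF x(2)] by linarith
    then have "\<bar>ln \<eta>\<bar> * (\<integral>y. \<sigma> y * indicator {y. norm x - 1 \<le> norm y} y \<partial>lborel) \<le> e"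
      using e'(2) by (meson abs_ge_zero mult_left_mono order_trans)
    ultimately have "\<bar>log_potential x - m * ln (norm x)\<bar> < 5 * e"
      using abs_log_potential_minus_mass_ln_le[OF \<open>1 \<le> \<rho>\<close> x(1) \<eta>(1,2)] \<eta>(3)
      unfolding m_def by linarith
    then show "dist (log_potential x - integral\<^sup>L lborel \<sigma> * ln (norm x)) 0 < \<epsilon>"
      by (simp add: dist_real_def e_def m_def)
  qed
qed

lemma has_derivative_V_nuc_plus_log_potential:
  assumes "x \<notin> xs ` {..<K}"
  shows "((\<lambda>x. V_nuc K xs x + log_potential x) has_derivative
           blinfun_apply (potential_grad K xs log_potential_grad x)) (at x)"
proof -
  have "(\<lambda>h. - (\<Sum>i<K. grad_ln_norm (x - xs i)) \<bullet> h + log_potential_grad x \<bullet> h)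
      = blinfun_apply (potential_grad K xs log_potential_grad x)"
    by (simp add: fun_eq_iff potential_grad_def inner_diff_left)
  then show ?thesis
    using has_derivative_add[OF has_derivative_V_nuc[OF assms] has_derivative_log_potential]
    by (simp add: add.commute)
qed

lemma continuous_on_potential_grad:
  "continuous_on (- (xs ` {..<K})) (potential_grad K xs log_potential_grad)"
  unfolding potential_grad_def
proof (intro bounded_linear.continuous_on[OF bounded_linear_blinfun_inner_right]
    continuous_on_diff continuous_on_sum)
  show "continuous_on (- (xs ` {..<K})) log_potential_grad"
    using continuous_on_log_potential_grad by (rule continuous_on_subset) auto
  show "continuous_on (- (xs ` {..<K})) (\<lambda>x. grad_ln_norm (x - xs i))" if "i \<in> {..<K}" for i
    using that by (intro continuous_on_subset[OF continuous_on_grad_ln_norm_diff]) auto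
qed

end

lemma admissible_density_borel_representative:
  assumes "admissible_density \<sigma>0"
  obtains \<sigma> where "borel_density \<sigma>" "AE x in lborel. \<sigma>0 x = \<sigma> x"
proof -
  from assms have m0 [measurable]: "\<sigma>0 \<in> borel_measurable lebesgue"
    and bounds: "\<And>x. 0 \<le> \<sigma>0 x \<and> \<sigma>0 x \<le> 1"
    and int: "integrable lebesgue (\<lambda>x. \<sigma>0 x * ln (2 + norm x))"
    by (auto simp: admissible_density_def)
  obtain g where "g \<in> borel_measurable lborel" and ae_g: "AE x in lborel. \<sigma>0 x = g x"
    using completion_ex_borel_measurable_real[OF m0] by blast
  \<comment> \<open>clipping to \<open>[0, 1]\<close> keeps the pointwise bounds required by the locale\<close>
  define \<sigma> where "\<sigma> x = max 0 (min 1 (g x))" for x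
  have [measurable]: "\<sigma> \<in> borel_measurable borel"
    unfolding \<sigma>_def using \<open>g \<in> _\<close> by measurable
  have ae: "AE x in lborel. \<sigma>0 x = \<sigma> x"
    using ae_g by eventually_elim (metis bounds \<sigma>_def max.absorb2 min.absorb2)
  have "integrable lebesgue (\<lambda>x. \<sigma> x * ln (2 + norm x))"
  proof (rule integrable_cong_AE[THEN iffD1, OF _ _ _ int])
    have "(\<lambda>x::real^2. ln (2 + norm x)) \<in> borel_measurable lborel" by measurable
    then show "(\<lambda>x. \<sigma>0 x * ln (2 + norm x)) \<in> borel_measurable lebesgue"
      by (intro borel_measurable_times m0 measurable_completion)
    show "(\<lambda>x. \<sigma> x * ln (2 + norm x)) \<in> borel_measurable lebesgue"
      by (intro measurable_completion) measurable
    show "AE x in lebesgue. \<sigma>0 x * ln (2 + norm x) = \<sigma> x * ln (2 + norm x)"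
      unfolding AE_completion_iff using ae by eventually_elim simp
  qed
  then have "integrable lborel (\<lambda>x. \<sigma> x * ln (2 + norm x))"
    by (subst (asm) integrable_completion) measurable
  then have "borel_density \<sigma>"
    by unfold_locales (auto simp: \<sigma>_def)
  with ae show ?thesis using that by blast
qed

lemma
  fixes k :: "real^2 \<Rightarrow> real"
  assumes [measurable]: "\<sigma>0 \<in> borel_measurable lebesgue" "\<sigma> \<in> borel_measurable borel" "k \<in> borel_measurable borel"
    and ae: "AE x in lborel. \<sigma>0 x = \<sigma> x"
  shows integral_lebesgue_eq_borel_representative:
      "integral\<^sup>L lebesgue (\<lambda>y. \<sigma>0 y * k y) = integral\<^sup>L lborel (\<lambda>y. \<sigma> y * k y)"
    and integrable_lebesgue_iff_borel_representative:
      "integrable lebesgue (\<lambda>y. \<sigma>0 y * k y) \<longleftrightarrow> integrable lborel (\<lambda>y. \<sigma> y * k y)"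
proof -
  have m0: "(\<lambda>y. \<sigma>0 y * k y) \<in> borel_measurable lebesgue"
    by (intro borel_measurable_times assms(1) measurable_completion) simp
  have m [measurable]: "(\<lambda>y. \<sigma> y * k y) \<in> borel_measurable lborel" by measurable
  have ae': "AE y in lebesgue. \<sigma>0 y * k y = \<sigma> y * k y"
    unfolding AE_completion_iff using ae by eventually_elim simp
  show "integral\<^sup>L lebesgue (\<lambda>y. \<sigma>0 y * k y) = integral\<^sup>L lborel (\<lambda>y. \<sigma> y * k y)"
    using integral_cong_AE[OF m0 measurable_completion[OF m] ae'] integral_completion[OF m] by simp
  show "integrable lebesgue (\<lambda>y. \<sigma>0 y * k y) \<longleftrightarrow> integrable lborel (\<lambda>y. \<sigma> y * k y)"
    using integrable_cong_AE[OF m0 measurable_completion[OF m] ae'] integrable_completion[OF m] by simp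
qed

lemma Phi_regular_and_asymptotic:
  assumes adm: "admissible_density \<sigma>0"
  shows "(\<forall>x. integrable lebesgue (\<lambda>y. \<sigma>0 y * ln (norm (x - y)))) \<and>
       continuous_on (- (xs ` {..<K})) (Phi K xs \<sigma>0) \<and>
       (\<exists>D :: real^2 \<Rightarrow> ((real^2) \<Rightarrow>\<^sub>L real).
          (\<forall>x\<in>- (xs ` {..<K}). (Phi K xs \<sigma>0 has_derivative blinfun_apply (D x)) (at x)) \<and>
          continuous_on (- (xs ` {..<K})) D) \<and>
       ((\<lambda>x. Phi K xs \<sigma>0 x + (real K - integral\<^sup>L lebesgue \<sigma>0) * ln (norm x)) \<longlongrightarrow> 0) at_infinity"
proof -
  obtain \<sigma> where "borel_density \<sigma>" and ae: "AE x in lborel. \<sigma>0 x = \<sigma> x"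
    using admissible_density_borel_representative[OF adm] by blast
  interpret borel_density \<sigma> by fact
  have m0: "\<sigma>0 \<in> borel_measurable lebesgue" using adm by (simp add: admissible_density_def)
  have ln_meas: "(\<lambda>y. ln (norm (x - y))) \<in> borel_measurable borel" for x :: "real^2" by measurable
  note transfer = integral_lebesgue_eq_borel_representative[OF m0 measurable_density _ ae]
    integrable_lebesgue_iff_borel_representative[OF m0 measurable_density _ ae]
  have Phi_eq: "Phi K xs \<sigma>0 = (\<lambda>x. V_nuc K xs x + log_potential x)"
    by (simp add: fun_eq_iff Phi_def log_potential_def transfer(1)[OF ln_meas])
  have mass: "integral\<^sup>L lebesgue \<sigma>0 = integral\<^sup>L lborel \<sigma>"
    using transfer(1)[of "\<lambda>_. 1"] by simp
  have deriv: "\<forall>x\<in>- (xs ` {..<K}). (Phi K xs \<sigma>0 has_derivative blinfun_apply (potential_grad K xs log_potential_grad x)) (at x)"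
    unfolding Phi_eq using has_derivative_V_nuc_plus_log_potential by blast
  have "((\<lambda>x. (V_nuc K xs x + real K * ln (norm x)) + (log_potential x - integral\<^sup>L lborel \<sigma> * ln (norm x))) \<longlongrightarrow> 0 + 0) at_infinity"
    by (intro tendsto_add V_nuc_plus_ln_tendsto_0 log_potential_minus_mass_ln_tendsto_0)
  then have "((\<lambda>x. Phi K xs \<sigma>0 x + (real K - integral\<^sup>L lebesgue \<sigma>0) * ln (norm x)) \<longlongrightarrow> 0) at_infinity"
    by (simp add: Phi_eq mass algebra_simps)
  moreover have "continuous_on (- (xs ` {..<K})) (Phi K xs \<sigma>0)"
    using deriv by (intro continuous_at_imp_continuous_on ballI has_derivative_continuous) blast
  ultimately show ?thesis
    using deriv continuous_on_potential_grad transfer(2)[OF ln_meas] integrable_log_kernel by blast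
qed

theorem lemma3p5:
  fixes K :: nat and xs :: "nat \<Rightarrow> real^2"
  assumes "K \<ge> 1"
  shows
   "(\<forall>\<sigma>\<in>M_TF K.
       (\<forall>x. integrable lebesgue (\<lambda>y. \<sigma> y * ln (norm (x - y)))) \<and>
       continuous_on (- (xs ` {..<K})) (Phi K xs \<sigma>) \<and>
       (\<exists>D :: real^2 \<Rightarrow> ((real^2) \<Rightarrow>\<^sub>L real).
          (\<forall>x\<in>- (xs ` {..<K}). (Phi K xs \<sigma> has_derivative blinfun_apply (D x)) (at x)) \<and>
          continuous_on (- (xs ` {..<K})) D) \<and>
       (Phi K xs \<sigma> \<longlongrightarrow> 0) at_infinity)
    \<and>
    (\<forall>\<sigma>. admissible_density \<sigma> \<and> integral\<^sup>L lebesgue \<sigma> < real K \<longrightarrow>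
       ((\<lambda>x. Phi K xs \<sigma> x + (real K - integral\<^sup>L lebesgue \<sigma>) * ln (norm x)) \<longlongrightarrow> 0)
         at_infinity)"
  by (auto simp: M_TF_def dest: Phi_regular_and_asymptotic[of _ xs K])

end
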